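(* Let $M$ be a loopless matroid of rank $d+1$, and let $\{F_1,\dots,F_d\}$ and $\{G_1,\dots,G_d\}$ be multisets of flats of $M$ of rank at least $2$ such that both $t_{F_1}\cdots t_{F_d}$ and $t_{G_1}\cdots t_{G_d}$ lie in the support of $VP^\nabla_M$. If $G_d$ appears more times in $\{G_1,\dots,G_d\}$ than in $\{F_1,\dots,F_d\}$, then there exists a flat $F_m$ appearing more times in $\{F_1,\dots,F_d\}$ than in $\{G_1,\dots,G_d\}$ such that $t_{F_1}\cdots t_{F_d}t_{G_d}/t_{F_m}$ lies in the support of $VP^\nabla_M$.
   Context: $VP^\nabla_M(\underline t)=\sum_{(F_1,\dots,F_d)}t_{F_1}\cdots t_{F_d}$, the sum over ordered $d$-tuples of nonempty flats satisfying $\operatorname{rk}_M(\bigcup_{j\in J}F_j)\ge|J|+1$ for all nonempty $J\subseteq\{1,\dots,d\}$ (this is the volume polynomial $\int_M(\sum_F t_Fh_F)^d$ of the Chow ring of $M$ in its simplicial generators). Hence a monomial $t_{F_1}\cdots t_{F_d}$ lies in the support of $VP^\nabla_M$ if and only if the multiset $\{F_1,\dots,F_d\}$ satisfies this rank condition. *)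

theory Defs
  imports Main "HOL-Library.Multiset"
begin

definition matroid :: "'a set \<Rightarrow> ('a set \<Rightarrow> bool) \<Rightarrow> bool" where
  "matroid E indep \<longleftrightarrow> finite E \<and> (\<forall>X. indep X \<longrightarrow> X \<subseteq> E) \<and> indep {} \<and>
     (\<forall>X Y. indep X \<and> Y \<subseteq> X \<longrightarrow> indep Y) \<and>
     (\<forall>X Y. indep X \<and> indep Y \<and> card X < card Y \<longrightarrow> (\<exists>y\<in>Y - X. indep (insert y X)))"

definition mrank :: "('a set \<Rightarrow> bool) \<Rightarrow> 'a set \<Rightarrow> nat" where
  "mrank indep X = Max {card I | I. I \<subseteq> X \<and> indep I}"

definition loopless :: "'a set \<Rightarrow> ('a set \<Rightarrow> bool) \<Rightarrow> bool" where
  "loopless E indep \<longleftrightarrow> (\<forall>x\<in>E. indep {x})"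

definition is_flat :: "'a set \<Rightarrow> ('a set \<Rightarrow> bool) \<Rightarrow> 'a set \<Rightarrow> bool" where
  "is_flat E indep F \<longleftrightarrow> F \<subseteq> E \<and> (\<forall>x\<in>E - F. mrank indep (insert x F) > mrank indep F)"

text \<open>Ordered d-tuples (indexed by 1..d) of nonempty flats satisfying the rank condition:
  these index the terms of the volume polynomial.\<close>
definition admissible_tuple :: "'a set \<Rightarrow> ('a set \<Rightarrow> bool) \<Rightarrow> nat \<Rightarrow> (nat \<Rightarrow> 'a set) \<Rightarrow> bool" where
  "admissible_tuple E indep d F \<longleftrightarrow>
     (\<forall>j\<in>{1..d}. is_flat E indep (F j) \<and> F j \<noteq> {}) \<and>
     (\<forall>J. J \<subseteq> {1..d} \<and> J \<noteq> {} \<longrightarrow> mrank indep (\<Union>(F ` J)) \<ge> card J + 1)"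

text \<open>The multiset of flats of a tuple (i.e. the monomial t_{F_1}...t_{F_d}).\<close>
definition tuple_mset :: "nat \<Rightarrow> (nat \<Rightarrow> 'a set) \<Rightarrow> 'a set multiset" where
  "tuple_mset d F = image_mset F (mset_set {1..d})"

definition in_VP_support :: "'a set \<Rightarrow> ('a set \<Rightarrow> bool) \<Rightarrow> nat \<Rightarrow> 'a set multiset \<Rightarrow> bool" where
  "in_VP_support E indep d S \<longleftrightarrow> (\<exists>F. admissible_tuple E indep d F \<and> tuple_mset d F = S)"

end

theory Submission
  imports Defs
begin

text \<open>Call a nonempty set K of positions tight for g if
  rk(g \<union> \<Union>{F_k : k \<in> K}) \<le> |K| + 1. Replacing F_m by g keeps an admissible tuple admissible
  as long as m lies in every tight set, and by submodularity the tight sets are closed under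
  intersection, so they all contain the tight set B of least cardinality. If every F_m with
  m \<in> B occurred in G at least as often as in F, then together with the surplus copy of g
  they would give |B| + 1 entries of G inside g \<union> \<Union>{F_k : k \<in> B}, forcing its rank up to |B| + 2.
  Hence some position m \<in> B carries a flat that F has more often than G, and it can be
  exchanged for g. If there is no tight set, any such position will do.\<close>

context
  fixes E :: "'a set" and indep :: "'a set \<Rightarrow> bool"
  assumes M: "matroid E indep"
begin

lemma indep_subset_ground: "indep I \<Longrightarrow> I \<subseteq> E"
  using M by (simp add: matroid_def)

lemma indep_empty: "indep {}"
  using M by (simp add: matroid_def)

lemma indep_subset: "indep I \<Longrightarrow> J \<subseteq> I \<Longrightarrow> indep J"
  using M by (auto simp: matroid_def)

lemma indep_augment:
  "indep I \<Longrightarrow> indep J \<Longrightarrow> card I < card J \<Longrightarrow> \<exists>y\<in>J - I. indep (insert y I)"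
  using M by (auto simp: matroid_def)

lemma finite_ground: "finite E"
  using M by (simp add: matroid_def)

lemma indep_finite: "indep I \<Longrightarrow> finite I"
  using finite_subset[OF indep_subset_ground finite_ground] .

lemma finite_indep_cards: "finite {card I | I. I \<subseteq> X \<and> indep I}"
proof (rule finite_subset)
  show "{card I | I. I \<subseteq> X \<and> indep I} \<subseteq> card ` Pow E"
    using indep_subset_ground by blast
qed (simp add: finite_ground)

lemma mrank_attained: "\<exists>I. I \<subseteq> X \<and> indep I \<and> card I = mrank indep X"
proof -
  have "card ({} :: 'a set) \<in> {card I | I. I \<subseteq> X \<and> indep I}"
    using indep_empty by blast
  then have "mrank indep X \<in> {card I | I. I \<subseteq> X \<and> indep I}"
    unfolding mrank_def using finite_indep_cards by (intro Max_in) auto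
  then show ?thesis by auto
qed

lemma card_le_mrank: "I \<subseteq> X \<Longrightarrow> indep I \<Longrightarrow> card I \<le> mrank indep X"
  unfolding mrank_def using finite_indep_cards by (intro Max_ge) auto

lemma mrank_mono: "X \<subseteq> Y \<Longrightarrow> mrank indep X \<le> mrank indep Y"
  using mrank_attained[of X] card_le_mrank[of _ Y] by force

lemma mrank_empty: "mrank indep {} = 0"
  using mrank_attained[of "{}"] by auto

lemma indep_extend_to_mrank:
  "indep I \<Longrightarrow> I \<subseteq> X \<Longrightarrow> \<exists>J. I \<subseteq> J \<and> J \<subseteq> X \<and> indep J \<and> card J = mrank indep X"
proof (induction "mrank indep X - card I" arbitrary: I rule: less_induct)
  case less
  show ?case
  proof (cases "card I < mrank indep X")
    case False
    then have "card I = mrank indep X"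
      using card_le_mrank[OF less.prems(2,1)] by simp
    then show ?thesis
      using less.prems by blast
  next
    case True
    obtain K where K: "K \<subseteq> X" "indep K" "card K = mrank indep X"
      using mrank_attained by blast
    then have "card I < card K"
      using True by simp
    then obtain y where y: "y \<in> K - I" "indep (insert y I)"
      using indep_augment[OF less.prems(1) K(2)] by blast
    have "card (insert y I) = card I + 1"
      using y(1) indep_finite[OF less.prems(1)] by simp
    then have "mrank indep X - card (insert y I) < mrank indep X - card I"
      using True by linarith
    moreover have "insert y I \<subseteq> X"
      using y(1) K(1) less.prems(2) by blast
    ultimately have "\<exists>J. insert y I \<subseteq> J \<and> J \<subseteq> X \<and> indep J \<and> card J = mrank indep X"
      using y(2) by (intro less.hyps)
    then show ?thesis
      by blast
  qed
qed

lemma mrank_submodular: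
  "mrank indep (X \<union> Y) + mrank indep (X \<inter> Y) \<le> mrank indep X + mrank indep Y"
proof -
  obtain I where I: "I \<subseteq> X \<inter> Y" "indep I" "card I = mrank indep (X \<inter> Y)"
    using mrank_attained by blast
  then obtain J where J: "I \<subseteq> J" "J \<subseteq> X \<union> Y" "indep J" "card J = mrank indep (X \<union> Y)"
    using indep_extend_to_mrank[of I "X \<union> Y"] by blast
  have fin: "finite J"
    using J(3) by (rule indep_finite)
  have "card J + card I \<le> card (J \<inter> X \<union> J \<inter> Y) + card (J \<inter> X \<inter> (J \<inter> Y))"
    using I(1) J(1,2) fin by (intro add_mono card_mono) auto
  also have "\<dots> = card (J \<inter> X) + card (J \<inter> Y)"
    using card_Un_Int[of "J \<inter> X" "J \<inter> Y"] fin by simp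
  also have "\<dots> \<le> mrank indep X + mrank indep Y"
    using indep_subset[OF J(3)] by (intro add_mono card_le_mrank) auto
  finally show ?thesis
    using I(3) J(4) by simp
qed

end

lemma size_tuple_mset [simp]: "size (tuple_mset d F) = d"
  unfolding tuple_mset_def by simp

lemma set_mset_tuple_mset [simp]: "set_mset (tuple_mset d F) = F ` {1..d}"
  unfolding tuple_mset_def by simp

lemma image_mset_subseteq_tuple_mset:
  "J \<subseteq> {1..d} \<Longrightarrow> image_mset F (mset_set J) \<subseteq># tuple_mset d F"
  unfolding tuple_mset_def
  by (intro image_mset_subseteq_mono subset_imp_msubset_mset_set) auto

lemma filter_tuple_mset:
  "filter_mset P (tuple_mset d F) = image_mset F (mset_set {j \<in> {1..d}. P (F j)})"
  unfolding tuple_mset_def by (simp add: filter_mset_image_mset filter_mset_mset_set)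

lemma tuple_mset_fun_upd:
  assumes "m \<in> {1..d}"
  shows "tuple_mset d (F(m := g)) = tuple_mset d F - {#F m#} + {#g#}"
proof -
  have "mset_set {1..d} = add_mset m (mset_set ({1..d} - {m}))"
    using assms by (simp add: mset_set.remove)
  moreover have "image_mset (F(m := g)) (mset_set ({1..d} - {m}))
      = image_mset F (mset_set ({1..d} - {m}))"
    by (intro image_mset_cong) simp
  ultimately show ?thesis
    unfolding tuple_mset_def by simp
qed

lemma size_eq_ex_count_greater:
  assumes "size M = size N" and "count M x < count N x"
  shows "\<exists>y. count N y < count M y"
proof (rule ccontr)
  assume "\<nexists>y. count N y < count M y"
  then have "M \<subset># N"
    using assms(2) by (metis leI subseteq_mset_def subset_mset.less_le)
  then show False
    using assms(1) mset_subset_size by fastforce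
qed

lemma add_mset_subseteq_of_count_le:
  assumes "S \<subseteq># M" and "\<forall>x\<in>#S. count M x \<le> count N x" and "count M g < count N g"
  shows "add_mset g S \<subseteq># N"
  unfolding subseteq_mset_def
proof
  fix x
  have "count S x \<le> count M x"
    using assms(1) by (rule mset_subset_eq_count)
  then show "count (add_mset g S) x \<le> count N x"
    using assms(2,3) by (cases "x \<in># S") (auto simp: not_in_iff intro: count_inI)
qed

lemma admissible_tuple_mrank:
  "admissible_tuple E indep d F \<Longrightarrow> J \<subseteq> {1..d} \<Longrightarrow> J \<noteq> {} \<Longrightarrow>
     card J + 1 \<le> mrank indep (\<Union>(F ` J))"
  unfolding admissible_tuple_def by blast

definition tight_set ::
    "('a set \<Rightarrow> bool) \<Rightarrow> nat \<Rightarrow> (nat \<Rightarrow> 'a set) \<Rightarrow> 'a set \<Rightarrow> nat set \<Rightarrow> bool" where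
  "tight_set indep d F g K \<longleftrightarrow>
     K \<subseteq> {1..d} \<and> K \<noteq> {} \<and> mrank indep (g \<union> \<Union>(F ` K)) \<le> card K + 1"

lemma admissible_tuple_fun_upd:
  assumes "admissible_tuple E indep d F" and "m \<in> {1..d}"
    and "is_flat E indep g" and "g \<noteq> {}" and "mrank indep g \<ge> 2"
    and "\<forall>K. tight_set indep d F g K \<longrightarrow> m \<in> K"
  shows "admissible_tuple E indep d (F(m := g))"
  unfolding admissible_tuple_def
proof (intro conjI allI impI)
  show "\<forall>j\<in>{1..d}. is_flat E indep ((F(m := g)) j) \<and> (F(m := g)) j \<noteq> {}"
    using assms(1,3,4) unfolding admissible_tuple_def by simp
next
  fix J assume J: "J \<subseteq> {1..d} \<and> J \<noteq> {}"
  show "card J + 1 \<le> mrank indep (\<Union>((F(m := g)) ` J))"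
  proof (cases "m \<in> J")
    case False
    then have "(F(m := g)) ` J = F ` J"
      by auto
    then show ?thesis
      using admissible_tuple_mrank[OF assms(1)] J by simp
  next
    case True
    define K where "K = J - {m}"
    have union: "\<Union>((F(m := g)) ` J) = g \<union> \<Union>(F ` K)"
      using True by (auto simp: K_def)
    have "finite J"
      using J finite_subset[of J "{1..d}"] by simp
    then have card: "card J = card K + 1"
      using True card.remove[of J m] by (simp add: K_def)
    show ?thesis
    proof (cases "K = {}")
      case True
      then show ?thesis
        using union card assms(5) by simp
    next
      case False
      moreover have "K \<subseteq> {1..d}" "m \<notin> K"
        using J by (auto simp: K_def)
      ultimately have "card K + 1 < mrank indep (g \<union> \<Union>(F ` K))"
        using assms(6) unfolding tight_set_def by auto
      then show ?thesis
        using union card by simp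
    qed
  qed
qed

lemma tight_set_Int:
  assumes M: "matroid E indep" and F: "admissible_tuple E indep d F"
    and g: "mrank indep g \<ge> 2"
    and K: "tight_set indep d F g K" and L: "tight_set indep d F g L"
  shows "tight_set indep d F g (K \<inter> L)"
proof -
  let ?X = "g \<union> \<Union>(F ` K)" and ?Y = "g \<union> \<Union>(F ` L)"
  have K': "K \<subseteq> {1..d}" "K \<noteq> {}" "mrank indep ?X \<le> card K + 1"
    using K by (simp_all add: tight_set_def)
  have L': "L \<subseteq> {1..d}" "L \<noteq> {}" "mrank indep ?Y \<le> card L + 1"
    using L by (simp_all add: tight_set_def)
  have "card (K \<union> L) + 1 \<le> mrank indep (\<Union>(F ` (K \<union> L)))"
    using admissible_tuple_mrank[OF F, of "K \<union> L"] K'(1,2) L'(1) by simp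
  also have "\<dots> \<le> mrank indep (?X \<union> ?Y)"
    using M by (rule mrank_mono) auto
  finally have "card (K \<union> L) + 1 + mrank indep (?X \<inter> ?Y) \<le> card K + card L + 2"
    using mrank_submodular[OF M, of ?X ?Y] K'(3) L'(3) by linarith
  moreover have "card (K \<union> L) + card (K \<inter> L) = card K + card L"
    using card_Un_Int[of K L] finite_subset[OF K'(1)] finite_subset[OF L'(1)] by simp
  ultimately have rank_Int: "mrank indep (?X \<inter> ?Y) \<le> card (K \<inter> L) + 1"
    by linarith
  have "mrank indep g \<le> mrank indep (?X \<inter> ?Y)"
    using M by (rule mrank_mono) auto
  then have "K \<inter> L \<noteq> {}"
    using rank_Int g by auto
  moreover have "mrank indep (g \<union> \<Union>(F ` (K \<inter> L))) \<le> mrank indep (?X \<inter> ?Y)"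
    using M by (rule mrank_mono) auto
  ultimately show ?thesis
    using K'(1) rank_Int unfolding tight_set_def by auto
qed

lemma least_tight_set_subset:
  assumes "matroid E indep" and "admissible_tuple E indep d F" and "mrank indep g \<ge> 2"
    and B: "tight_set indep d F g B" "\<forall>K. tight_set indep d F g K \<longrightarrow> card B \<le> card K"
    and K: "tight_set indep d F g K"
  shows "B \<subseteq> K"
proof -
  have "card B \<le> card (B \<inter> K)"
    using B tight_set_Int[OF assms(1-3) B(1) K] by blast
  moreover have "finite B"
    using B(1) finite_subset by (auto simp: tight_set_def)
  ultimately show ?thesis
    using card_seteq[of B "B \<inter> K"] by auto
qed

lemma tight_set_has_excess:
  assumes M: "matroid E indep" and G: "admissible_tuple E indep d G"
    and B: "tight_set indep d F g B"
    and g: "count (tuple_mset d F) g < count (tuple_mset d G) g"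
  shows "\<exists>m\<in>B. count (tuple_mset d G) (F m) < count (tuple_mset d F) (F m)"
proof (rule ccontr)
  assume "\<not> ?thesis"
  then have no_excess: "\<forall>m\<in>B. count (tuple_mset d F) (F m) \<le> count (tuple_mset d G) (F m)"
    by (simp add: not_less)
  define Y where "Y = g \<union> \<Union>(F ` B)"
  define J where "J = {j \<in> {1..d}. G j \<subseteq> Y}"
  define P where "P = add_mset g (image_mset F (mset_set B))"
  have fin: "finite B"
    using B finite_subset by (auto simp: tight_set_def)
  have "image_mset F (mset_set B) \<subseteq># tuple_mset d F"
    using B by (intro image_mset_subseteq_tuple_mset) (simp add: tight_set_def)
  then have "P \<subseteq># tuple_mset d G"
    unfolding P_def using fin no_excess g by (intro add_mset_subseteq_of_count_le) auto
  then have "filter_mset (\<lambda>A. A \<subseteq> Y) P \<subseteq># image_mset G (mset_set J)"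
    using multiset_filter_mono[of P "tuple_mset d G" "\<lambda>A. A \<subseteq> Y"]
    unfolding filter_tuple_mset J_def by blast
  moreover have "filter_mset (\<lambda>A. A \<subseteq> Y) P = filter_mset (\<lambda>_. True) P"
    using fin by (intro filter_mset_cong0) (auto simp: P_def Y_def)
  ultimately have "P \<subseteq># image_mset G (mset_set J)"
    by simp
  then have card_J: "card B + 1 \<le> card J"
    using size_mset_mono by (fastforce simp: P_def)
  have "J \<noteq> {}"
    using card_J by (intro notI) simp
  then have "card J + 1 \<le> mrank indep (\<Union>(G ` J))"
    by (intro admissible_tuple_mrank[OF G]) (auto simp: J_def)
  moreover have "mrank indep (\<Union>(G ` J)) \<le> mrank indep Y"
    using M by (rule mrank_mono) (auto simp: J_def)
  ultimately show False
    using B card_J unfolding tight_set_def Y_def by linarith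
qed

lemma admissible_tuple_exchange:
  assumes M: "matroid E indep"
    and F: "admissible_tuple E indep d F" and G: "admissible_tuple E indep d G"
    and g: "is_flat E indep g" "mrank indep g \<ge> 2"
    and count_g: "count (tuple_mset d F) g < count (tuple_mset d G) g"
  shows "\<exists>m\<in>{1..d}. count (tuple_mset d G) (F m) < count (tuple_mset d F) (F m) \<and>
           admissible_tuple E indep d (F(m := g))"
proof -
  have "g \<noteq> {}"
    using g(2) mrank_empty[OF M] by auto
  then have exchangeable: "admissible_tuple E indep d (F(m := g))"
    if "m \<in> {1..d}" "\<forall>K. tight_set indep d F g K \<longrightarrow> m \<in> K" for m
    using admissible_tuple_fun_upd[OF F that(1) g(1) _ g(2) that(2)] by blast
  show ?thesis
  proof (cases "\<exists>K. tight_set indep d F g K")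
    case False
    obtain A where A: "count (tuple_mset d G) A < count (tuple_mset d F) A"
      using size_eq_ex_count_greater[OF _ count_g] by auto
    then have "A \<in># tuple_mset d F"
      by (intro count_inI) simp
    then obtain m where "m \<in> {1..d}" "A = F m"
      by auto
    then show ?thesis
      using exchangeable[of m] False A by auto
  next
    case True
    then obtain B where B: "tight_set indep d F g B"
      "\<forall>K. tight_set indep d F g K \<longrightarrow> card B \<le> card K"
      using ex_has_least_nat[of "tight_set indep d F g" _ card] by blast
    obtain m where m: "m \<in> B" "count (tuple_mset d G) (F m) < count (tuple_mset d F) (F m)"
      using tight_set_has_excess[OF M G B(1) count_g] by blast
    have "\<forall>K. tight_set indep d F g K \<longrightarrow> m \<in> K"
      using least_tight_set_subset[OF M F g(2) B] m(1) by blast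
    moreover have "m \<in> {1..d}"
      using B(1) m(1) by (auto simp: tight_set_def)
    ultimately show ?thesis
      using exchangeable m(2) by blast
  qed
qed

theorem proposition5p15:
  fixes E :: "'a set" and indep :: "'a set \<Rightarrow> bool" and d :: nat
    and F G :: "nat \<Rightarrow> 'a set"
  assumes "matroid E indep" and "loopless E indep" and "mrank indep E = d + 1"
    and "\<forall>j\<in>{1..d}. is_flat E indep (F j) \<and> mrank indep (F j) \<ge> 2"
    and "\<forall>j\<in>{1..d}. is_flat E indep (G j) \<and> mrank indep (G j) \<ge> 2"
    and "in_VP_support E indep d (tuple_mset d F)"
    and "in_VP_support E indep d (tuple_mset d G)"
    and "count (tuple_mset d G) (G d) > count (tuple_mset d F) (G d)"
  shows "\<exists>m\<in>{1..d}. count (tuple_mset d F) (F m) > count (tuple_mset d G) (F m) \<and>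
           in_VP_support E indep d (tuple_mset d F - {#F m#} + {#G d#})"
proof -
  obtain F' where F': "admissible_tuple E indep d F'" "tuple_mset d F' = tuple_mset d F"
    using assms(6) unfolding in_VP_support_def by blast
  obtain G' where G': "admissible_tuple E indep d G'" "tuple_mset d G' = tuple_mset d G"
    using assms(7) unfolding in_VP_support_def by blast
  have "d \<noteq> 0"
    using assms(8) by (intro notI) (simp add: tuple_mset_def)
  then have "is_flat E indep (G d)" "mrank indep (G d) \<ge> 2"
    using assms(5) by auto
  moreover have "count (tuple_mset d F') (G d) < count (tuple_mset d G') (G d)"
    using assms(8) F'(2) G'(2) by simp
  ultimately obtain m where m: "m \<in> {1..d}"
    "count (tuple_mset d G') (F' m) < count (tuple_mset d F') (F' m)"
    "admissible_tuple E indep d (F'(m := G d))"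
    using admissible_tuple_exchange[OF assms(1) F'(1) G'(1)] by blast
  have "F' m \<in># tuple_mset d F"
    using m(1) F'(2)[symmetric] by simp
  then obtain m' where m': "m' \<in> {1..d}" "F m' = F' m"
    by auto
  have "tuple_mset d (F'(m := G d)) = tuple_mset d F - {#F m'#} + {#G d#}"
    using tuple_mset_fun_upd[OF m(1), of F' "G d"] F'(2) m'(2) by simp
  then have "in_VP_support E indep d (tuple_mset d F - {#F m'#} + {#G d#})"
    unfolding in_VP_support_def using m(3) by blast
  moreover have "count (tuple_mset d G) (F m') < count (tuple_mset d F) (F m')"
    using m(2) m'(2) F'(2) G'(2) by simp
  ultimately show ?thesis
    using m'(1) by blast
qed

end
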